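(* Let $L\in\mathcal{C}^2(\mathbb{R}^n\times\mathbb{R}^n,\mathbb{R})$, $\mathbf{g}\in\mathcal{C}^1(\mathbb{R}^n,\mathbb{R}^m)$ with Jacobian $\nabla\mathbf{g}(\mathbf{q})\in\mathbb{R}^{m\times n}$, and $\tilde{\mathbf{B}}:\mathbb{R}^n\times\mathbb{R}^n\to\mathbb{R}^{n\times p}$. Consider the Lagrange equations of the first kind $$\dot{\mathbf{q}}=\mathbf{v},\qquad \frac{\mathrm{d}}{\mathrm{d}t}\big(\partial_{\mathbf{v}}L(\mathbf{q},\mathbf{v})\big)=\partial_{\mathbf{q}}L(\mathbf{q},\mathbf{v})-\nabla\mathbf{g}(\mathbf{q})^\top\boldsymbol{\lambda}+\tilde{\mathbf{B}}(\mathbf{q},\mathbf{v})\mathbf{u},\qquad \mathbf{0}=\nabla\mathbf{g}(\mathbf{q})\mathbf{v},$$ with $\mathbf{q},\mathbf{v}\in\mathbb{R}^n$, $\boldsymbol{\lambda}\in\mathbb{R}^m$, $\mathbf{u}\in\mathbb{R}^p$. Set $\mathbf{x}=(\mathbf{q},\mathbf{v},\boldsymbol{\lambda})$, $$\mathbf{E}(\mathbf{x})=\begin{bmatrix}\mathbf{I}&\mathbf{0}&\mathbf{0}\\ \mathbf{0}&\partial^2_{\mathbf{v}\mathbf{v}}L&\mathbf{0}\\ \mathbf{0}&\mathbf{0}&\mathbf{0}\end{bmatrix},\quad \mathbf{J}(\mathbf{x})=\begin{bmatrix}\mathbf{0}&\mathbf{I}&\mathbf{0}\\ -\mathbf{I}&\partial^2_{\mathbf{q}\mathbf{v}}L-(\partial^2_{\mathbf{q}\mathbf{v}}L)^\top&-\nabla\mathbf{g}^\top\\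 \mathbf{0}&\nabla\mathbf{g}&\mathbf{0}\end{bmatrix},\quad \mathbf{z}(\mathbf{x})=\begin{bmatrix}-\partial_{\mathbf{q}}L+(\partial^2_{\mathbf{q}\mathbf{v}}L)\mathbf{v}\\ \mathbf{v}\\ \boldsymbol{\lambda}\end{bmatrix},\quad \mathbf{B}(\mathbf{x})=\begin{bmatrix}\mathbf{0}\\ \tilde{\mathbf{B}}(\mathbf{q},\mathbf{v})\\ \mathbf{0}\end{bmatrix},$$ and $H(\mathbf{q},\mathbf{v},\boldsymbol{\lambda})=\partial_{\mathbf{v}}L(\mathbf{q},\mathbf{v})^\top\mathbf{v}-L(\mathbf{q},\mathbf{v})$. Then (a) a differentiable trajectory $(\mathbf{q},\mathbf{v},\boldsymbol{\lambda})$ solves the Lagrange equations above if and only if it solves $\mathbf{E}(\mathbf{x})\dot{\mathbf{x}}=\mathbf{J}(\mathbf{x})\mathbf{z}(\mathbf{x})+\mathbf{B}(\mathbf{x})\mathbf{u}$; (b) $\mathbf{E}$ is symmetric, $\mathbf{J}$ is skew-symmetric, and $\mathbf{E}(\mathbf{x})^\top\mathbf{z}(\mathbf{x})=\nabla H(\mathbf{x})$ for all $\mathbf{x}$; hence the system is a port-Hamiltonian descriptor system with output $\mathbf{y}=\mathbf{B}^\top\mathbf{z}=\tilde{\mathbf{B}}^\top\mathbf{v}$, and along every solution $\frac{\mathrm{d}}{\mathrm{d}t}H=\mathbf{u}^\top\tilde{\mathbf{B}}^\top\mathbf{v}$.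
   Context: Gradients and partial derivatives $\partial_{\mathbf{q}}f$ are column vectors. Second derivatives are defined by $\partial^2_{\mathbf{q}\mathbf{v}}f:=\frac{\partial}{\partial\mathbf{v}}\big(\frac{\partial f}{\partial\mathbf{q}}\big)$, i.e. the matrix with $(i,j)$ entry $\partial^2 f/\partial q_i\partial v_j$; similarly $\partial^2_{\mathbf{v}\mathbf{v}}L$ has entries $\partial^2L/\partial v_i\partial v_j$. A port-Hamiltonian descriptor system is a system $\mathbf{E}(\mathbf{x})\dot{\mathbf{x}}=\mathbf{J}(\mathbf{x})\mathbf{z}(\mathbf{x})+\mathbf{B}(\mathbf{x})\mathbf{u}$, $\mathbf{y}=\mathbf{B}(\mathbf{x})^\top\mathbf{z}$, with $\mathbf{E}$ symmetric (possibly singular), $\mathbf{J}$ skew-symmetric, and a Hamiltonian $H$ satisfying $\mathbf{E}(\mathbf{x})^\top\mathbf{z}(\mathbf{x})=\nabla H(\mathbf{x})$. *)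

theory Defs
  imports "HOL-Analysis.Analysis"
begin

definition C1 :: "('a::real_normed_vector \<Rightarrow> 'b::real_normed_vector) \<Rightarrow> bool" where
  "C1 f \<longleftrightarrow> (\<exists>f'. (\<forall>x. (f has_derivative blinfun_apply (f' x)) (at x)) \<and> continuous_on UNIV f')"

definition C2 :: "('a::real_normed_vector \<Rightarrow> 'b::real_normed_vector) \<Rightarrow> bool" where
  "C2 f \<longleftrightarrow> (\<exists>f'. (\<forall>x. (f has_derivative blinfun_apply (f' x)) (at x)) \<and> C1 f')"

definition pq :: "(real^'n \<Rightarrow> real^'n \<Rightarrow> real) \<Rightarrow> real^'n \<Rightarrow> real^'n \<Rightarrow> real^'n" where
  "pq L q v = (\<chi> i. deriv (\<lambda>t. L (q + t *\<^sub>R axis i 1) v) 0)"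

definition pv :: "(real^'n \<Rightarrow> real^'n \<Rightarrow> real) \<Rightarrow> real^'n \<Rightarrow> real^'n \<Rightarrow> real^'n" where
  "pv L q v = (\<chi> i. deriv (\<lambda>t. L q (v + t *\<^sub>R axis i 1)) 0)"

definition d2vv :: "(real^'n \<Rightarrow> real^'n \<Rightarrow> real) \<Rightarrow> real^'n \<Rightarrow> real^'n \<Rightarrow> real^'n^'n" where
  "d2vv L q v = (\<chi> i j. deriv (\<lambda>t. pv L q (v + t *\<^sub>R axis j 1) $ i) 0)"

definition d2qv :: "(real^'n \<Rightarrow> real^'n \<Rightarrow> real) \<Rightarrow> real^'n \<Rightarrow> real^'n \<Rightarrow> real^'n^'n" where
  "d2qv L q v = (\<chi> i j. deriv (\<lambda>t. pq L q (v + t *\<^sub>R axis j 1) $ i) 0)"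

definition jac :: "(real^'n \<Rightarrow> real^'m) \<Rightarrow> real^'n \<Rightarrow> real^'n^'m" where
  "jac g q = matrix (frechet_derivative g (at q))"

text \<open>State x = (q, v, lambda) as a vector indexed by 'n + ('n + 'm).\<close>
definition xvec :: "real^'n \<Rightarrow> real^'n \<Rightarrow> real^'m \<Rightarrow> real^('n::finite + ('n + 'm::finite))" where
  "xvec q v lam = (\<chi> i. case i of Inl a \<Rightarrow> q $ a | Inr (Inl a) \<Rightarrow> v $ a | Inr (Inr a) \<Rightarrow> lam $ a)"

definition xq :: "real^('n::finite + ('n + 'm::finite)) \<Rightarrow> real^'n" where "xq x = (\<chi> a. x $ Inl a)"
definition xv :: "real^('n::finite + ('n + 'm::finite)) \<Rightarrow> real^'n" where "xv x = (\<chi> a. x $ Inr (Inl a))"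
definition xl :: "real^('n::finite + ('n + 'm::finite)) \<Rightarrow> real^'m" where "xl x = (\<chi> a. x $ Inr (Inr a))"

definition Emat :: "(real^'n \<Rightarrow> real^'n \<Rightarrow> real) \<Rightarrow> real^('n::finite + ('n + 'm::finite)) \<Rightarrow> real^('n + ('n + 'm))^('n + ('n + 'm))" where
  "Emat L x = (\<chi> i j. case (i, j) of
      (Inl a, Inl b) \<Rightarrow> (if a = b then 1 else 0)
    | (Inr (Inl a), Inr (Inl b)) \<Rightarrow> d2vv L (xq x) (xv x) $ a $ b
    | _ \<Rightarrow> 0)"

definition Jmat :: "(real^'n \<Rightarrow> real^'n \<Rightarrow> real) \<Rightarrow> (real^'n \<Rightarrow> real^'m) \<Rightarrow> real^('n::finite + ('n + 'm::finite)) \<Rightarrow> real^('n + ('n + 'm))^('n + ('n + 'm))" where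
  "Jmat L g x = (let S = d2qv L (xq x) (xv x); G = jac g (xq x) in
    (\<chi> i j. case (i, j) of
      (Inl a, Inr (Inl b)) \<Rightarrow> (if a = b then 1 else 0)
    | (Inr (Inl a), Inl b) \<Rightarrow> - (if a = b then 1 else 0)
    | (Inr (Inl a), Inr (Inl b)) \<Rightarrow> (S - transpose S) $ a $ b
    | (Inr (Inl a), Inr (Inr b)) \<Rightarrow> - (transpose G) $ a $ b
    | (Inr (Inr a), Inr (Inl b)) \<Rightarrow> G $ a $ b
    | _ \<Rightarrow> 0))"

definition zvec :: "(real^'n \<Rightarrow> real^'n \<Rightarrow> real) \<Rightarrow> real^('n::finite + ('n + 'm::finite)) \<Rightarrow> real^('n + ('n + 'm))" where
  "zvec L x = (let w = - pq L (xq x) (xv x) + d2qv L (xq x) (xv x) *v xv x in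
    (\<chi> i. case i of Inl a \<Rightarrow> w $ a | Inr (Inl a) \<Rightarrow> xv x $ a | Inr (Inr a) \<Rightarrow> xl x $ a))"

definition Bmat :: "(real^'n \<Rightarrow> real^'n \<Rightarrow> real^'p^'n) \<Rightarrow> real^('n::finite + ('n + 'm::finite)) \<Rightarrow> real^'p^('n + ('n + 'm))" where
  "Bmat Bt x = (\<chi> i k. case i of Inr (Inl a) \<Rightarrow> Bt (xq x) (xv x) $ a $ k | _ \<Rightarrow> 0)"

definition Ham :: "(real^'n \<Rightarrow> real^'n \<Rightarrow> real) \<Rightarrow> real^('n::finite + ('n + 'm::finite)) \<Rightarrow> real" where
  "Ham L x = pv L (xq x) (xv x) \<bullet> xv x - L (xq x) (xv x)"

end

theory Submission
  imports Defs
begin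

(*
  Part (a) is pointwise linear algebra once the chain rule is applied.  With S = d2qv L,
  W = d2vv L and G = jac g, the block rows of E x' = J z + B u read q' = v,
  W v' = pq L - S^T v - G^T lam + Bt u, and G v = 0, while d/dt (pv L) = S^T q' + W v'.
  E is symmetric because W is a block of the Hessian of the C^2 function L (Schwarz's theorem);
  J is skew by construction.  Writing DL, D^2L for the Frechet derivatives of L,
  H = DL(q,v)(0,v) - L(q,v) has derivative D^2L(q,v)(dq,dv)(0,v) - DL(q,v)(dq,0), whose
  coefficients are S v - pq L and W v, i.e. E^T z.  The power balance is then
  dH/dt = z . E x' = z . J z + z . B u = (B^T z) . u.
*)

lemma second_difference_estimate:
  fixes f :: "'a::real_normed_vector \<Rightarrow> real" and f' :: "'a \<Rightarrow> 'a \<Rightarrow>\<^sub>L real"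
    and f'' :: "'a \<Rightarrow> 'a \<Rightarrow>\<^sub>L ('a \<Rightarrow>\<^sub>L real)"
  assumes f': "\<And>y. (f has_derivative blinfun_apply (f' y)) (at y)"
    and f'': "\<And>y. (f' has_derivative blinfun_apply (f'' y)) (at y)"
    and cont: "isCont f'' x" and "e > 0"
  obtains d where "d > 0" and "\<And>a b. norm a + norm b < d \<Longrightarrow>
     \<bar>f (x + a + b) - f (x + a) - f (x + b) + f x - f'' x b a\<bar> \<le> e * norm a * norm b"
proof -
  obtain d where "d > 0" and d: "\<And>y. dist y x < d \<Longrightarrow> dist (f'' y) (f'' x) < e"
    using cont \<open>e > 0\<close> unfolding continuous_at_eps_delta by blast
  have f'_increment: "norm (f' (x + z + b) - f' (x + z) - f'' x b) \<le> norm b * e"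
    if "norm z + norm b < d" for z b
  proof -
    have "norm (f' (x + z + b) - f' (x + z) - f'' x ((x + z + b) - (x + z))) \<le> norm ((x + z + b) - (x + z)) * e"
    proof (rule differentiable_bound_linearization[where S="ball x d" and f'="\<lambda>y. blinfun_apply (f'' y)"])
      fix t :: real assume t: "t \<in> {0..1}"
      have "norm (z + t *\<^sub>R b) \<le> norm z + norm b"
        using t norm_triangle_ineq[of z "t *\<^sub>R b"] mult_left_le_one_le[of "norm b" t] by simp
      then show "x + z + t *\<^sub>R (x + z + b - (x + z)) \<in> ball x d"
        using that norm_minus_cancel[of "z + t *\<^sub>R b"] by (simp add: dist_norm add.assoc)
    next
      fix y assume "y \<in> ball x d"
      then have "dist (f'' y) (f'' x) < e" using d by (metis mem_ball dist_commute)
      then show "onorm (blinfun_apply (f'' y) - blinfun_apply (f'' x)) \<le> e"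
        by (simp add: dist_norm norm_blinfun.rep_eq minus_blinfun.rep_eq fun_diff_def)
    qed (use \<open>d > 0\<close> in \<open>auto intro: has_derivative_at_withinI[OF f'']\<close>)
    then show ?thesis by simp
  qed
  show ?thesis
  proof (rule that[OF \<open>d > 0\<close>])
    fix a b :: 'a assume ab: "norm a + norm b < d"
    define \<psi> where "\<psi> z = f (x + z + b) - f (x + z) - f'' x b z" for z
    have "(\<psi> has_derivative blinfun_apply (f' (x + z + b) - f' (x + z) - f'' x b)) (at z)" for z
      unfolding \<psi>_def
      by (auto intro!: derivative_eq_intros has_derivative_compose[OF _ f']
          bounded_linear.has_derivative[OF blinfun.bounded_linear_right] simp: minus_blinfun.rep_eq)
    moreover have "norm b < d"
      using ab norm_ge_zero[of a] by linarith
    ultimately have "norm (\<psi> a - \<psi> 0) \<le> (norm b * e) * norm (a - 0)"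
      using ab f'_increment
      by (intro differentiable_bound[OF convex_ball, of 0 "d - norm b"])
         (auto intro: has_derivative_at_withinI simp flip: norm_blinfun.rep_eq)
    then show "\<bar>f (x + a + b) - f (x + a) - f (x + b) + f x - f'' x b a\<bar> \<le> e * norm a * norm b"
      by (simp add: \<psi>_def blinfun.zero_right algebra_simps)
  qed
qed

theorem second_derivative_symmetric:
  fixes f :: "'a::real_normed_vector \<Rightarrow> real" and f' :: "'a \<Rightarrow> 'a \<Rightarrow>\<^sub>L real"
    and f'' :: "'a \<Rightarrow> 'a \<Rightarrow>\<^sub>L ('a \<Rightarrow>\<^sub>L real)"
  assumes f': "\<And>y. (f has_derivative blinfun_apply (f' y)) (at y)"
    and f'': "\<And>y. (f' has_derivative blinfun_apply (f'' y)) (at y)"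
    and cont: "isCont f'' x"
  shows "f'' x h k = f'' x k h"
proof -
  define D where "D = f'' x k h - f'' x h k"
  define N where "N = norm h * norm k"
  have bound: "\<bar>D\<bar> \<le> 2 * e * N" if "e > 0" for e
  proof -
    obtain d where "d > 0" and d: "\<And>a b. norm a + norm b < d \<Longrightarrow>
       \<bar>f (x + a + b) - f (x + a) - f (x + b) + f x - f'' x b a\<bar> \<le> e * norm a * norm b"
      using second_difference_estimate[OF f' f'' cont \<open>e > 0\<close>] by blast
    define s where "s = d / (2 * (norm h + norm k + 1))"
    have "s > 0" using \<open>d > 0\<close> by (simp add: s_def add_nonneg_pos)
    have "s * (norm h + norm k) \<le> s * (norm h + norm k + 1)"
      using \<open>s > 0\<close> by simp
    also have "\<dots> = d / 2"
      using add_nonneg_pos[of "norm h + norm k" 1] by (simp add: s_def field_simps)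
    finally have "s * (norm h + norm k) < d"
      using \<open>d > 0\<close> by simp
    then have small: "norm (s *\<^sub>R h) + norm (s *\<^sub>R k) < d"
      using \<open>s > 0\<close> by (simp add: algebra_simps)
    define \<Delta> where "\<Delta> = f (x + s *\<^sub>R h + s *\<^sub>R k) - f (x + s *\<^sub>R h) - f (x + s *\<^sub>R k) + f x"
    \<comment> \<open>The second difference \<Delta> is symmetric in h and k, its approximations by f'' x are not.\<close>
    have "\<bar>\<Delta> - s * s * f'' x k h\<bar> \<le> e * (s * s * N)"
      using d[OF small] \<open>s > 0\<close>
      by (simp add: \<Delta>_def N_def blinfun.scaleR_left blinfun.scaleR_right mult_ac)
    moreover have "\<bar>\<Delta> - s * s * f'' x h k\<bar> \<le> e * (s * s * N)"
      using d[of "s *\<^sub>R k" "s *\<^sub>R h"] small \<open>s > 0\<close>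
      by (simp add: \<Delta>_def N_def blinfun.scaleR_left blinfun.scaleR_right ac_simps)
    ultimately have "\<bar>s * s * D\<bar> \<le> 2 * e * (s * s * N)"
      by (simp add: D_def algebra_simps)
    then have "s * s * \<bar>D\<bar> \<le> s * s * (2 * e * N)"
      using \<open>s > 0\<close> by (simp add: abs_mult mult_ac)
    then show ?thesis using \<open>s > 0\<close> by simp
  qed
  have "\<bar>D\<bar> \<le> 0 + e" if "e > 0" for e
  proof -
    have "2 * N + 1 > 0" by (simp add: N_def add_nonneg_pos)
    then have "2 * (e / (2 * N + 1)) * N = e - e / (2 * N + 1)"
      by (simp add: field_simps)
    then have "2 * (e / (2 * N + 1)) * N \<le> e"
      using \<open>e > 0\<close> \<open>2 * N + 1 > 0\<close> by simp
    moreover have "\<bar>D\<bar> \<le> 2 * (e / (2 * N + 1)) * N"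
      using \<open>e > 0\<close> \<open>2 * N + 1 > 0\<close> by (intro bound) simp
    ultimately show ?thesis by simp
  qed
  then have "\<bar>D\<bar> \<le> 0" by (rule field_le_epsilon)
  then show ?thesis by (simp add: D_def)
qed

lemma linear_axis_expansion:
  fixes f :: "real^'n \<Rightarrow> real"
  assumes "linear f"
  shows "f h = (\<Sum>i\<in>UNIV. h $ i * f (axis i 1))"
proof -
  interpret linear f by fact
  have "f h = f (\<Sum>i\<in>UNIV. h $ i *\<^sub>R axis i 1)"
    using basis_expansion[of h] by (simp add: scalar_mult_eq_scaleR)
  also have "\<dots> = (\<Sum>i\<in>UNIV. h $ i * f (axis i 1))" by (simp add: sum scale)
  finally show ?thesis .
qed

lemma linear_Pair_axis_expansion:
  fixes f :: "(real^'n) \<times> (real^'m) \<Rightarrow> real"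
  assumes "linear f"
  shows "f (h, 0) = (\<Sum>i\<in>UNIV. h $ i * f (axis i 1, 0))"
    and "f (0, k) = (\<Sum>i\<in>UNIV. k $ i * f (0, axis i 1))"
proof -
  have "linear (\<lambda>h. (h, 0 :: real^'m))" "linear (\<lambda>k. (0 :: real^'n, k))"
    by (simp_all add: linear_iff)
  then have lin: "linear (\<lambda>h. f (h, 0))" "linear (\<lambda>k. f (0, k))"
    using linear_compose[OF _ assms] by (simp_all add: o_def)
  show "f (h, 0) = (\<Sum>i\<in>UNIV. h $ i * f (axis i 1, 0))"
    by (rule linear_axis_expansion[OF lin(1)])
  show "f (0, k) = (\<Sum>i\<in>UNIV. k $ i * f (0, axis i 1))"
    by (rule linear_axis_expansion[OF lin(2)])
qed

lemma has_vector_derivative_vec_nthI: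
  fixes f :: "real \<Rightarrow> real^'n"
  assumes "\<And>i. ((\<lambda>s. f s $ i) has_vector_derivative D $ i) (at t within S)"
  shows "(f has_vector_derivative D) (at t within S)"
  unfolding has_vector_derivative_def
proof (subst has_derivative_componentwise_within, intro ballI)
  fix b :: "real^'n" assume "b \<in> Basis"
  then obtain i where "b = axis i 1" by (auto simp: Basis_vec_def)
  then show "((\<lambda>x. f x \<bullet> b) has_derivative (\<lambda>x. x *\<^sub>R D \<bullet> b)) (at t within S)"
    using assms[of i] by (simp add: inner_axis has_vector_derivative_def)
qed

lemma deriv_along_line:
  fixes f :: "'a::real_normed_vector \<Rightarrow> real"
  assumes "(f has_derivative A) (at x)"
  shows "deriv (\<lambda>t. f (x + t *\<^sub>R h)) 0 = A h"
proof -
  interpret bounded_linear A using assms by (rule has_derivative_bounded_linear)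
  have "((\<lambda>t. x + t *\<^sub>R h) has_derivative (\<lambda>t. t *\<^sub>R h)) (at 0)"
    by (auto intro!: derivative_eq_intros)
  then have "((\<lambda>t. f (x + t *\<^sub>R h)) has_derivative (\<lambda>t. A (t *\<^sub>R h))) (at 0)"
    using has_derivative_compose assms by fastforce
  moreover have "(\<lambda>t. A (t *\<^sub>R h)) = (*) (A h)"
    by (simp add: fun_eq_iff scaleR)
  ultimately have "((\<lambda>t. f (x + t *\<^sub>R h)) has_derivative (*) (A h)) (at 0)"
    by simp
  then show ?thesis
    by (simp add: DERIV_imp_deriv has_field_derivative_def)
qed

lemma skew_symmetric_quadratic_form_zero:
  fixes A :: "real^'a^'a"
  assumes "transpose A = - A"
  shows "z \<bullet> (A *v z) = 0"
proof -
  have "z \<bullet> (A *v z) = (transpose A *v z) \<bullet> z" by (simp add: dot_lmul_matrix)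
  also have "(transpose A *v z) = - (A *v z)"
    by (simp add: assms vec_eq_iff matrix_vector_mult_def sum_negf)
  also have "(- (A *v z)) \<bullet> z = - (z \<bullet> (A *v z))" by (simp add: inner_commute)
  finally show ?thesis by simp
qed

lemma port_Hamiltonian_power_balance:
  fixes x :: "real \<Rightarrow> real^'a" and E J :: "real^'a^'a" and B :: "real^'p^'a"
  assumes H: "(H has_derivative (\<lambda>h. (transpose E *v z) \<bullet> h)) (at (x t))"
    and x: "(x has_vector_derivative x') (at t)"
    and descriptor: "E *v x' = J *v z + B *v u"
    and skew: "transpose J = - J"
  shows "((\<lambda>s. H (x s)) has_real_derivative (transpose B *v z) \<bullet> u) (at t)"
proof -
  have "(transpose E *v z) \<bullet> x' = z \<bullet> (E *v x')" by (simp add: dot_lmul_matrix)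
  also have "\<dots> = z \<bullet> (J *v z) + z \<bullet> (B *v u)" by (simp add: descriptor inner_add_right)
  also have "z \<bullet> (J *v z) = 0" by (rule skew_symmetric_quadratic_form_zero[OF skew])
  also have "z \<bullet> (B *v u) = (transpose B *v z) \<bullet> u" by (simp add: dot_lmul_matrix)
  finally have power: "(transpose E *v z) \<bullet> x' = (transpose B *v z) \<bullet> u" by simp
  have "((\<lambda>s. H (x s)) has_derivative (\<lambda>h. (transpose E *v z) \<bullet> (h *\<^sub>R x'))) (at t)"
    using has_derivative_compose[OF x[unfolded has_vector_derivative_def] H] .
  moreover have "(\<lambda>h. (transpose E *v z) \<bullet> (h *\<^sub>R x')) = (*) ((transpose B *v z) \<bullet> u)"
    by (rule ext) (simp only: inner_scaleR_right power mult.commute)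
  ultimately show ?thesis
    unfolding has_field_derivative_def by simp
qed

lemma xq_xvec [simp]: "xq (xvec q v l) = q" by (simp add: xq_def xvec_def)
lemma xv_xvec [simp]: "xv (xvec q v l) = v" by (simp add: xv_def xvec_def)
lemma xl_xvec [simp]: "xl (xvec q v l) = l" by (simp add: xl_def xvec_def)

lemma xvec_nth:
  "xvec q v l $ Inl a = q $ a" "xvec q v l $ Inr (Inl a) = v $ a" "xvec q v l $ Inr (Inr c) = l $ c"
  by (simp_all add: xvec_def)

lemma bounded_linear_xq: "bounded_linear (xq :: real^('n::finite + ('n + 'm::finite)) \<Rightarrow> real^'n)"
  by (simp add: linear_conv_bounded_linear[symmetric] linear_iff xq_def vec_eq_iff)

lemma bounded_linear_xv: "bounded_linear (xv :: real^('n::finite + ('n + 'm::finite)) \<Rightarrow> real^'n)"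
  by (simp add: linear_conv_bounded_linear[symmetric] linear_iff xv_def vec_eq_iff)

lemma all_Plus_Plus_iff:
  "(\<forall>i::'a + ('b + 'c). P i)
     \<longleftrightarrow> (\<forall>a. P (Inl a)) \<and> (\<forall>b. P (Inr (Inl b))) \<and> (\<forall>c. P (Inr (Inr c)))"
  by (metis sum.exhaust)

lemma vec_Plus_Plus_eq_iff:
  fixes X Y :: "'r^('a::finite + ('b::finite + 'c::finite))"
  shows "X = Y \<longleftrightarrow> (\<forall>a. X $ Inl a = Y $ Inl a) \<and> (\<forall>b. X $ Inr (Inl b) = Y $ Inr (Inl b))
                   \<and> (\<forall>c. X $ Inr (Inr c) = Y $ Inr (Inr c))"
  by (simp add: vec_eq_iff all_Plus_Plus_iff)

lemma sum_UNIV_Plus: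
  "(\<Sum>i\<in>(UNIV::('a::finite + 'b::finite) set). f i)
     = (\<Sum>a\<in>UNIV. f (Inl a)) + (\<Sum>b\<in>UNIV. f (Inr b))"
  by (subst UNIV_Plus_UNIV[symmetric], subst sum.Plus) (simp_all add: o_def)

lemma inner_state_split:
  fixes X Y :: "real^('n::finite + ('n + 'm::finite))"
  shows "X \<bullet> Y = xq X \<bullet> xq Y + xv X \<bullet> xv Y + xl X \<bullet> xl Y"
  by (simp add: inner_vec_def sum_UNIV_Plus xq_def xv_def xl_def)

lemma Emat_mult_vec_nth:
  fixes X :: "real^('n::finite + ('n + 'm::finite))"
  shows "(Emat L x *v X) $ Inl a = X $ Inl a"
    "(Emat L x *v X) $ Inr (Inl a) = (d2vv L (xq x) (xv x) *v xv X) $ a"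
    "(Emat L x *v X) $ Inr (Inr c) = 0"
  by (simp_all add: matrix_vector_mult_def Emat_def sum_UNIV_Plus xv_def mult_if_delta)

lemma Jmat_mult_vec_nth:
  fixes Z :: "real^('n::finite + ('n + 'm::finite))"
  shows "(Jmat L g x *v Z) $ Inl a = xv Z $ a"
    "(Jmat L g x *v Z) $ Inr (Inl a) = - xq Z $ a
        + ((d2qv L (xq x) (xv x) - transpose (d2qv L (xq x) (xv x))) *v xv Z) $ a
        - (transpose (jac g (xq x)) *v xl Z) $ a"
    "(Jmat L g x *v Z) $ Inr (Inr c) = (jac g (xq x) *v xv Z) $ c"
  by (simp_all add: matrix_vector_mult_def Jmat_def Let_def sum_UNIV_Plus xv_def xq_def xl_def
      mult_if_delta sum_negf)

lemma Bmat_mult_vec_nth: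
  "(Bmat Bt x *v u) $ Inl a = 0"
  "(Bmat Bt x *v u) $ Inr (Inl a) = (Bt (xq x) (xv x) *v u) $ a"
  "(Bmat Bt x *v u) $ Inr (Inr c) = 0"
  by (simp_all add: matrix_vector_mult_def Bmat_def)

lemma zvec_components:
  "xq (zvec L x) = - pq L (xq x) (xv x) + d2qv L (xq x) (xv x) *v xv x"
  "xv (zvec L x) = xv x"
  "xl (zvec L x) = xl x"
  by (simp_all add: zvec_def Let_def xq_def xv_def xl_def vec_eq_iff)

lemma Jmat_skew: "transpose (Jmat L g x) = - Jmat L g x"
  by (simp add: vec_eq_iff transpose_def Jmat_def Let_def all_Plus_Plus_iff)

lemma Bmat_output: "transpose (Bmat Bt x) *v zvec L x = transpose (Bt (xq x) (xv x)) *v xv x"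
  by (simp add: vec_eq_iff transpose_def Bmat_def matrix_vector_mult_def sum_UNIV_Plus zvec_def Let_def xv_def)

lemma xvec_has_vector_derivative:
  assumes "(q has_vector_derivative q') (at t)" and "(v has_vector_derivative v') (at t)"
    and "(lam has_vector_derivative l') (at t)"
  shows "((\<lambda>s. xvec (q s) (v s) (lam s)) has_vector_derivative xvec q' v' l') (at t)"
proof (rule has_vector_derivative_vec_nthI)
  fix i
  show "((\<lambda>s. xvec (q s) (v s) (lam s) $ i) has_vector_derivative xvec q' v' l' $ i) (at t)"
    using assms[THEN bounded_linear.has_vector_derivative[OF bounded_linear_vec_nth]]
    by (auto simp: xvec_def split: sum.split)
qed

lemma lagrange_iff_descriptor_pointwise:
  fixes q v q' v' :: "real^'n::finite" and l l' :: "real^'m::finite"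
  shows "(q' = v \<and> transpose (d2qv L q v) *v q' + d2vv L q v *v v'
            = pq L q v - transpose (jac g q) *v l + Bt q v *v u \<and> jac g q *v v = 0)
     \<longleftrightarrow> Emat L (xvec q v l) *v xvec q' v' l'
          = Jmat L g (xvec q v l) *v zvec L (xvec q v l) + Bmat Bt (xvec q v l) *v u"
proof (cases "q' = v")
  case True
  show ?thesis unfolding True vec_Plus_Plus_eq_iff
    by (auto simp: xvec_nth Emat_mult_vec_nth Jmat_mult_vec_nth Bmat_mult_vec_nth zvec_components vec_eq_iff
        matrix_vector_mult_diff_rdistrib algebra_simps simp del: transpose_matrix_vector)
next
  case False
  then show ?thesis
    by (auto simp: vec_Plus_Plus_eq_iff vec_eq_iff xvec_nth Emat_mult_vec_nth Jmat_mult_vec_nth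
        Bmat_mult_vec_nth zvec_components)
qed

lemma linear_blinfun_apply: "linear (blinfun_apply f)"
  by (rule bounded_linear.linear[OF blinfun.bounded_linear_right])

lemma linear_blinfun_apply_left: "linear (\<lambda>h. blinfun_apply (blinfun_apply f h) y)"
  by (intro bounded_linear.linear bounded_linear_intros)

locale C2_lagrangian =
  fixes L :: "real^'n \<Rightarrow> real^'n \<Rightarrow> real"
    and F' :: "(real^'n) \<times> (real^'n) \<Rightarrow> ((real^'n) \<times> (real^'n)) \<Rightarrow>\<^sub>L real"
    and F'' :: "(real^'n) \<times> (real^'n)
                 \<Rightarrow> ((real^'n) \<times> (real^'n)) \<Rightarrow>\<^sub>L (((real^'n) \<times> (real^'n)) \<Rightarrow>\<^sub>L real)"
  assumes L_has_derivative: "\<And>p. ((\<lambda>(q, v). L q v) has_derivative blinfun_apply (F' p)) (at p)"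
    and F'_has_derivative: "\<And>p. (F' has_derivative blinfun_apply (F'' p)) (at p)"
    and F''_continuous: "\<And>p. isCont F'' p"
begin

lemma F''_sym: "F'' p a b = F'' p b a"
  by (rule second_derivative_symmetric[OF L_has_derivative F'_has_derivative F''_continuous])

lemma F'_apply_has_derivative: "((\<lambda>p. F' p y) has_derivative (\<lambda>h. F'' p h y)) (at p)"
  by (rule bounded_linear.has_derivative[OF blinfun.bounded_linear_left F'_has_derivative])

lemma pq_nth: "pq L q v $ i = F' (q, v) (axis i 1, 0)"
  using deriv_along_line[OF L_has_derivative, of "(q, v)" "(axis i 1, 0)"] by (simp add: pq_def)

lemma pv_nth: "pv L q v $ i = F' (q, v) (0, axis i 1)"
  using deriv_along_line[OF L_has_derivative, of "(q, v)" "(0, axis i 1)"] by (simp add: pv_def)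

lemma d2vv_nth: "d2vv L q v $ i $ j = F'' (q, v) (0, axis i 1) (0, axis j 1)"
  using deriv_along_line[OF F'_apply_has_derivative[of "(0, axis i 1)" "(q, v)"], of "(0, axis j 1)"]
  by (simp add: d2vv_def pv_nth F''_sym)

lemma d2qv_nth: "d2qv L q v $ i $ j = F'' (q, v) (axis i 1, 0) (0, axis j 1)"
  using deriv_along_line[OF F'_apply_has_derivative[of "(axis i 1, 0)" "(q, v)"], of "(0, axis j 1)"]
  by (simp add: d2qv_def pq_nth F''_sym)

lemma Emat_symmetric: "transpose (Emat L x) = Emat L x"
  by (simp add: vec_eq_iff transpose_def Emat_def all_Plus_Plus_iff d2vv_nth F''_sym)

lemma pq_inner: "pq L q v \<bullet> h = F' (q, v) (h, 0)"
  by (simp add: inner_vec_def pq_nth linear_Pair_axis_expansion(1)[OF linear_blinfun_apply, of _ h] mult_ac)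

lemma pv_inner: "pv L q v \<bullet> h = F' (q, v) (0, h)"
  by (simp add: inner_vec_def pv_nth linear_Pair_axis_expansion(2)[OF linear_blinfun_apply, of _ h] mult_ac)

lemma d2qv_mult_inner: "(d2qv L q v *v w) \<bullet> h = F'' (q, v) (h, 0) (0, w)"
proof -
  have "F'' (q, v) (h, 0) (0, w) = (\<Sum>a\<in>UNIV. h $ a * F'' (q, v) (axis a 1, 0) (0, w))"
    by (rule linear_Pair_axis_expansion(1)[OF linear_blinfun_apply_left])
  also have "\<dots> = (\<Sum>a\<in>UNIV. h $ a * (\<Sum>b\<in>UNIV. w $ b * F'' (q, v) (axis a 1, 0) (0, axis b 1)))"
    by (simp only: linear_Pair_axis_expansion(2)[OF linear_blinfun_apply, of _ w])
  also have "\<dots> = (d2qv L q v *v w) \<bullet> h"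
    by (simp add: inner_vec_def matrix_vector_mult_def d2qv_nth sum_distrib_left sum_distrib_right mult_ac)
  finally show ?thesis by simp
qed

lemma d2vv_mult_inner: "(d2vv L q v *v w) \<bullet> h = F'' (q, v) (0, h) (0, w)"
proof -
  have "F'' (q, v) (0, h) (0, w) = (\<Sum>a\<in>UNIV. h $ a * F'' (q, v) (0, axis a 1) (0, w))"
    by (rule linear_Pair_axis_expansion(2)[OF linear_blinfun_apply_left])
  also have "\<dots> = (\<Sum>a\<in>UNIV. h $ a * (\<Sum>b\<in>UNIV. w $ b * F'' (q, v) (0, axis a 1) (0, axis b 1)))"
    by (simp only: linear_Pair_axis_expansion(2)[OF linear_blinfun_apply, of _ w])
  also have "\<dots> = (d2vv L q v *v w) \<bullet> h"
    by (simp add: inner_vec_def matrix_vector_mult_def d2vv_nth sum_distrib_left sum_distrib_right mult_ac)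
  finally show ?thesis by simp
qed

lemma Emat_zvec_inner:
  fixes x h :: "real^('n + ('n + 'm::finite))"
  defines "p \<equiv> (xq x, xv x)"
  shows "(Emat L x *v zvec L x) \<bullet> h
    = F'' p (xq h, 0) (0, xv x) + F'' p (0, xv h) (0, xv x) - F' p (xq h, 0)"
proof -
  have "xq (Emat L x *v zvec L x) = xq (zvec L x)"
    "xv (Emat L x *v zvec L x) = d2vv L (xq x) (xv x) *v xv (zvec L x)"
    "xl (Emat L x *v zvec L x) = 0"
    by (simp_all add: xq_def xv_def xl_def vec_eq_iff Emat_mult_vec_nth)
  then show ?thesis
    by (simp add: inner_state_split zvec_components inner_add_left inner_diff_left p_def
        pq_inner d2qv_mult_inner d2vv_mult_inner)
qed

lemma Ham_has_derivative:
  fixes x :: "real^('n + ('n + 'm::finite))"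
  shows "(Ham L has_derivative (\<lambda>h. (transpose (Emat L x) *v zvec L x) \<bullet> h)) (at x)"
proof -
  define P where "P = (\<lambda>x::real^('n + ('n + 'm)). (xq x, xv x))"
  have "bounded_linear P" unfolding P_def by (intro bounded_linear_Pair bounded_linear_xq bounded_linear_xv)
  then have P: "(P has_derivative P) (at x)" by (rule bounded_linear.has_derivative[OF _ has_derivative_ident])
  have xv: "((\<lambda>x. (0::real^'n, xv x)) has_derivative (\<lambda>h. (0, xv h))) (at x)"
    by (auto intro!: derivative_eq_intros bounded_linear.has_derivative[OF bounded_linear_xv])
  have "Ham L = (\<lambda>x. F' (P x) (0, xv x) - (\<lambda>(q, v). L q v) (P x))"
    by (simp add: fun_eq_iff Ham_def P_def pv_inner)
  moreover have "((\<lambda>x. F' (P x) (0, xv x) - (\<lambda>(q, v). L q v) (P x)) has_derivative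
      (\<lambda>h. F' (P x) (0, xv h) + F'' (P x) (P h) (0, xv x) - F' (P x) (P h))) (at x)"
    by (intro has_derivative_diff blinfun.FDERIV[OF has_derivative_compose[OF P F'_has_derivative] xv]
        has_derivative_compose[OF P L_has_derivative])
  moreover have "F' (P x) (0, xv h) + F'' (P x) (P h) (0, xv x) - F' (P x) (P h)
      = (transpose (Emat L x) *v zvec L x) \<bullet> h" for h
  proof -
    have "P h = (xq h, 0) + (0, xv h)" by (simp add: P_def)
    then show ?thesis
      by (simp only: Emat_symmetric Emat_zvec_inner blinfun.add_left blinfun.add_right P_def)
  qed
  ultimately show ?thesis by simp
qed

lemma pv_has_vector_derivative:
  assumes "(q has_vector_derivative q') (at t)" and "(v has_vector_derivative v') (at t)"
  shows "((\<lambda>s. pv L (q s) (v s)) has_vector_derivative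
           transpose (d2qv L (q t) (v t)) *v q' + d2vv L (q t) (v t) *v v') (at t)"
proof (rule has_vector_derivative_vec_nthI)
  fix i
  define p where "p = (q t, v t)"
  have "((\<lambda>s. (q s, v s)) has_derivative (\<lambda>h. h *\<^sub>R (q', v'))) (at t)"
    using has_vector_derivative_Pair[OF assms] by (simp add: has_vector_derivative_def)
  from has_derivative_compose[OF this F'_apply_has_derivative]
  have "((\<lambda>s. pv L (q s) (v s) $ i) has_derivative (\<lambda>h. F'' p (h *\<^sub>R (q', v')) (0, axis i 1))) (at t)"
    by (simp only: pv_nth p_def)
  then have "((\<lambda>s. pv L (q s) (v s) $ i) has_vector_derivative F'' p (q', v') (0, axis i 1)) (at t)"
    by (simp only: has_vector_derivative_def blinfun.scaleR_right blinfun.scaleR_left)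
  moreover have "F'' p (q', v') (0, axis i 1)
      = (transpose (d2qv L (q t) (v t)) *v q' + d2vv L (q t) (v t) *v v') $ i"
  proof -
    have "F'' p (q', v') = F'' p (q', 0) + F'' p (0, v')"
      using blinfun.add_right[of "F'' p" "(q', 0)" "(0, v')"] by simp
    then have "F'' p (q', v') (0, axis i 1) = F'' p (q', 0) (0, axis i 1) + F'' p (0, axis i 1) (0, v')"
      by (simp add: blinfun.add_left F''_sym[of p "(0, v')"])
    also have "\<dots> = (d2qv L (q t) (v t) *v axis i 1) \<bullet> q' + (d2vv L (q t) (v t) *v v') \<bullet> axis i 1"
      by (simp add: p_def d2qv_mult_inner d2vv_mult_inner)
    also have "\<dots> = (transpose (d2qv L (q t) (v t)) *v q' + d2vv L (q t) (v t) *v v') $ i"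
      by (simp add: inner_vec_def matrix_vector_mult_def transpose_def axis_def mult.commute
          mult_if_delta del: transpose_matrix_vector)
    finally show ?thesis .
  qed
  ultimately show "((\<lambda>s. pv L (q s) (v s) $ i) has_vector_derivative
      (transpose (d2qv L (q t) (v t)) *v q' + d2vv L (q t) (v t) *v v') $ i) (at t)"
    by simp
qed

lemma lagrange_iff_descriptor_at:
  assumes "q differentiable at t" and "v differentiable at t" and "lam differentiable at t"
  shows "(vector_derivative q (at t) = v t
             \<and> vector_derivative (\<lambda>s. pv L (q s) (v s)) (at t)
                 = pq L (q t) (v t) - transpose (jac g (q t)) *v lam t + Bt (q t) (v t) *v u
             \<and> jac g (q t) *v v t = 0)
     \<longleftrightarrow> Emat L (xvec (q t) (v t) (lam t))
            *v vector_derivative (\<lambda>s. xvec (q s) (v s) (lam s)) (at t)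
          = Jmat L g (xvec (q t) (v t) (lam t)) *v zvec L (xvec (q t) (v t) (lam t))
            + Bmat Bt (xvec (q t) (v t) (lam t)) *v u"
proof -
  note q = assms(1)[unfolded vector_derivative_works]
    and v = assms(2)[unfolded vector_derivative_works]
    and lam = assms(3)[unfolded vector_derivative_works]
  show ?thesis
    unfolding vector_derivative_at[OF xvec_has_vector_derivative[OF q v lam]]
      vector_derivative_at[OF pv_has_vector_derivative[OF q v]]
    by (rule lagrange_iff_descriptor_pointwise)
qed

lemma lagrange_iff_descriptor_on:
  assumes "open T" and "q differentiable_on T" and "v differentiable_on T" and "lam differentiable_on T"
  shows "(\<forall>t\<in>T. vector_derivative q (at t) = v t
             \<and> vector_derivative (\<lambda>s. pv L (q s) (v s)) (at t)
                 = pq L (q t) (v t) - transpose (jac g (q t)) *v lam t + Bt (q t) (v t) *v u t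
             \<and> jac g (q t) *v v t = 0)
     \<longleftrightarrow> (\<forall>t\<in>T. Emat L (xvec (q t) (v t) (lam t))
               *v vector_derivative (\<lambda>s. xvec (q s) (v s) (lam s)) (at t)
             = Jmat L g (xvec (q t) (v t) (lam t)) *v zvec L (xvec (q t) (v t) (lam t))
               + Bmat Bt (xvec (q t) (v t) (lam t)) *v u t)"
  using assms
  by (intro ball_cong refl lagrange_iff_descriptor_at) (auto simp: differentiable_on_eq_differentiable_at)

lemma Ham_power_balance:
  assumes "open T" and "q differentiable_on T" and "v differentiable_on T" and "lam differentiable_on T"
    and descriptor: "\<forall>t\<in>T. Emat L (xvec (q t) (v t) (lam t))
               *v vector_derivative (\<lambda>s. xvec (q s) (v s) (lam s)) (at t)
             = Jmat L g (xvec (q t) (v t) (lam t)) *v zvec L (xvec (q t) (v t) (lam t))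
               + Bmat Bt (xvec (q t) (v t) (lam t)) *v u t"
    and "t \<in> T"
  shows "((\<lambda>s. Ham L (xvec (q s) (v s) (lam s))) has_real_derivative
           u t \<bullet> (transpose (Bt (q t) (v t)) *v v t)) (at t)"
proof -
  have "q differentiable at t" "v differentiable at t" "lam differentiable at t"
    using assms(1-4) \<open>t \<in> T\<close> by (auto simp: differentiable_on_eq_differentiable_at)
  then have "((\<lambda>s. xvec (q s) (v s) (lam s)) has_vector_derivative
      xvec (vector_derivative q (at t)) (vector_derivative v (at t)) (vector_derivative lam (at t))) (at t)"
    unfolding vector_derivative_works by (rule xvec_has_vector_derivative)
  then have "((\<lambda>s. xvec (q s) (v s) (lam s)) has_vector_derivative
      vector_derivative (\<lambda>s. xvec (q s) (v s) (lam s)) (at t)) (at t)"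
    by (simp add: vector_derivative_at)
  from port_Hamiltonian_power_balance
    [OF Ham_has_derivative this descriptor[rule_format, OF \<open>t \<in> T\<close>] Jmat_skew]
  show ?thesis by (simp only: Bmat_output inner_commute xq_xvec xv_xvec)
qed

end

theorem mainTheorem1:
  fixes L :: "real^'n \<Rightarrow> real^'n \<Rightarrow> real"
    and g :: "real^'n \<Rightarrow> real^'m"
    and Bt :: "real^'n \<Rightarrow> real^'n \<Rightarrow> real^'p^'n"
  assumes L_C2: "C2 (\<lambda>(q, v). L q v)"
    and g_C1: "C1 g"
  shows
    "(\<forall>(T::real set) (q::real \<Rightarrow> real^'n) (v::real \<Rightarrow> real^'n) (lam::real \<Rightarrow> real^'m) (u::real \<Rightarrow> real^'p).
        open T \<longrightarrow> q differentiable_on T \<longrightarrow> v differentiable_on T \<longrightarrow> lam differentiable_on T \<longrightarrow>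
        ((\<forall>t\<in>T. vector_derivative q (at t) = v t
             \<and> vector_derivative (\<lambda>s. pv L (q s) (v s)) (at t)
                 = pq L (q t) (v t) - transpose (jac g (q t)) *v lam t + Bt (q t) (v t) *v u t
             \<and> jac g (q t) *v v t = 0)
         \<longleftrightarrow>
         (\<forall>t\<in>T. Emat L (xvec (q t) (v t) (lam t)) *v vector_derivative (\<lambda>s. xvec (q s) (v s) (lam s)) (at t)
             = Jmat L g (xvec (q t) (v t) (lam t)) *v zvec L (xvec (q t) (v t) (lam t))
               + Bmat Bt (xvec (q t) (v t) (lam t)) *v u t)))
   \<and> (\<forall>x::real^('n + ('n + 'm)). transpose (Emat L x) = Emat L x)
   \<and> (\<forall>x::real^('n + ('n + 'm)). transpose (Jmat L g x) = - Jmat L g x)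
   \<and> (\<forall>x::real^('n + ('n + 'm)). (Ham L has_derivative (\<lambda>h. (transpose (Emat L x) *v zvec L x) \<bullet> h)) (at x))
   \<and> (\<forall>x::real^('n + ('n + 'm)). transpose (Bmat Bt x) *v zvec L x = transpose (Bt (xq x) (xv x)) *v xv x)
   \<and> (\<forall>(T::real set) (q::real \<Rightarrow> real^'n) (v::real \<Rightarrow> real^'n) (lam::real \<Rightarrow> real^'m) (u::real \<Rightarrow> real^'p).
        open T \<longrightarrow> q differentiable_on T \<longrightarrow> v differentiable_on T \<longrightarrow> lam differentiable_on T \<longrightarrow>
        (\<forall>t\<in>T. Emat L (xvec (q t) (v t) (lam t)) *v vector_derivative (\<lambda>s. xvec (q s) (v s) (lam s)) (at t)
             = Jmat L g (xvec (q t) (v t) (lam t)) *v zvec L (xvec (q t) (v t) (lam t))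
               + Bmat Bt (xvec (q t) (v t) (lam t)) *v u t) \<longrightarrow>
        (\<forall>t\<in>T. ((\<lambda>s. Ham L (xvec (q s) (v s) (lam s))) has_real_derivative
                   (u t \<bullet> (transpose (Bt (q t) (v t)) *v v t))) (at t)))"
proof -
  obtain F' where L': "\<And>p. ((\<lambda>(q, v). L q v) has_derivative blinfun_apply (F' p)) (at p)"
    and "C1 F'"
    using L_C2 unfolding C2_def by blast
  then obtain F'' where "\<And>p. (F' has_derivative blinfun_apply (F'' p)) (at p)"
    and "continuous_on UNIV F''"
    unfolding C1_def by blast
  then interpret C2_lagrangian L F' F''
    using L' continuous_on_eq_continuous_at[OF open_UNIV, of F''] by unfold_locales blast+
  show ?thesis
    by (intro conjI allI impI ballI lagrange_iff_descriptor_on Emat_symmetric Jmat_skew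
        Ham_has_derivative Bmat_output; (assumption | rule Ham_power_balance; assumption))
qed

end
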